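(* Let $M\in\mathbb{N}$, $N\ge0$, and let $\mathcal{G}=(\mathcal{V},\mathcal{E})$ be a countable connected graph of bounded maximal degree. Then $A_N\le 2MV_N$ as operators on $\ell^2(\mathfrak{M}_N)$. Moreover, for any $\mathcal{V}'\subset\mathfrak{M}_N$, letting $A_N'$ be the weighted adjacency operator on the subgraph of $\mathcal{G}^{M,N}$ induced by $\mathcal{V}'$ (i.e. $(A_N'f)(\mathfrak{m})=\sum_{\mathfrak{n}\in\mathcal{V}',\,\mathfrak{n}\sim\mathfrak{m}}w(\mathfrak{m},\mathfrak{n})f(\mathfrak{n})$ for $f\in\ell^2(\mathcal{V}')$, $\mathfrak{m}\in\mathcal{V}'$), we have $A_N'\le 2MV_N\restriction_{\ell^2(\mathcal{V}')}$.
   Context: $\mathfrak{M}_N$ is the set of finitely supported functions $\mathfrak{m}:\mathcal{V}\to\{0,1,\dots,M\}$ with $\sum_x\mathfrak{m}(x)=N$. The graph $\mathcal{G}^{M,N}$ has vertex set $\mathfrak{M}_N$, with $\mathfrak{m}\sim\mathfrak{n}$ iff there is an edge $\{x_+,x_-\}\in\mathcal{E}$ with $\mathfrak{m}(x_\pm)=\mathfrak{n}(x_\pm)\pm1$ and $\mathfrak{m}(z)=\mathfrak{n}(z)$ for all other $z$. For $\mathfrak{m}\sim\mathfrak{n}$, $w(\mathfrak{m},\mathfrak{n})=\prod_{x:\mathfrak{m}(x)\neq\mathfrak{n}(x)}\big(\frac{M}{2}(\mathfrak{m}(x)+\mathfrak{n}(x)+1)-\mathfrak{m}(x)\mathfrak{n}(x)\big)^{1/2}$.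 $(A_Nf)(\mathfrak{m})=\sum_{\mathfrak{n}\sim\mathfrak{m}}w(\mathfrak{m},\mathfrak{n})f(\mathfrak{n})$ and $V_N$ is multiplication by $V_N(\mathfrak{m})=\sum_{\{x,y\}\in\mathcal{E}}\big(\frac{M}{2}(\mathfrak{m}(x)+\mathfrak{m}(y))-\mathfrak{m}(x)\mathfrak{m}(y)\big)$. *)

theory Defs
  imports "HOL-Analysis.Analysis" "HOL-Library.Complex_Order"
begin

definition simple_graph :: "'v set set \<Rightarrow> bool" where
  "simple_graph Ed \<longleftrightarrow> (\<forall>e\<in>Ed. card e = 2)"

definition graph_connected :: "'v set set \<Rightarrow> bool" where
  "graph_connected Ed \<longleftrightarrow> (\<forall>x y. (x, y) \<in> {(a, b). {a, b} \<in> Ed}\<^sup>*)"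

definition bounded_degree :: "'v set set \<Rightarrow> bool" where
  "bounded_degree Ed \<longleftrightarrow> (\<exists>D::nat. \<forall>x. finite {e\<in>Ed. x \<in> e} \<and> card {e\<in>Ed. x \<in> e} \<le> D)"

definition configs :: "nat \<Rightarrow> nat \<Rightarrow> ('v \<Rightarrow> nat) set" where
  "configs M N = {m. finite {x. m x \<noteq> 0} \<and> (\<forall>x. m x \<le> M) \<and> (\<Sum>x\<in>{x. m x \<noteq> 0}. m x) = N}"

definition cadj :: "'v set set \<Rightarrow> ('v \<Rightarrow> nat) \<Rightarrow> ('v \<Rightarrow> nat) \<Rightarrow> bool" where
  "cadj Ed m n \<longleftrightarrow> (\<exists>xp xm. {xp, xm} \<in> Ed \<and> m xp = n xp + 1 \<and> m xm + 1 = n xm \<and>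
      (\<forall>z. z \<noteq> xp \<and> z \<noteq> xm \<longrightarrow> m z = n z))"

definition weight :: "nat \<Rightarrow> ('v \<Rightarrow> nat) \<Rightarrow> ('v \<Rightarrow> nat) \<Rightarrow> real" where
  "weight M m n = (\<Prod>x\<in>{x. m x \<noteq> n x}.
      sqrt (real M / 2 * (real (m x) + real (n x) + 1) - real (m x) * real (n x)))"

text \<open>Weighted adjacency operator on the subgraph induced by \<open>V'\<close>
  (for \<open>V' = configs M N\<close> this is \<open>A_N\<close>).\<close>

definition adj_op :: "'v set set \<Rightarrow> nat \<Rightarrow> ('v \<Rightarrow> nat) set \<Rightarrow> (('v \<Rightarrow> nat) \<Rightarrow> complex)
    \<Rightarrow> ('v \<Rightarrow> nat) \<Rightarrow> complex" where
  "adj_op Ed M V' f m = (\<Sum>\<^sub>\<infinity>n\<in>{n\<in>V'. cadj Ed n m}. complex_of_real (weight M m n) * f n)"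

definition potential :: "'v set set \<Rightarrow> nat \<Rightarrow> ('v \<Rightarrow> nat) \<Rightarrow> real" where
  "potential Ed M m = (\<Sum>\<^sub>\<infinity>e\<in>Ed. real M / 2 * (\<Sum>x\<in>e. real (m x)) - (\<Prod>x\<in>e. real (m x)))"

definition l2_on :: "('v \<Rightarrow> nat) set \<Rightarrow> (('v \<Rightarrow> nat) \<Rightarrow> complex) \<Rightarrow> bool" where
  "l2_on V' f \<longleftrightarrow> (\<lambda>m. (cmod (f m))\<^sup>2) summable_on V'"

text \<open>Operator inequality \<open>A' \<le> 2M V\<restriction>V'\<close> in the form sense on \<open>\<ell>^2(V')\<close>
  (complex order: both sides real and compared).\<close>

definition form_ineq :: "'v set set \<Rightarrow> nat \<Rightarrow> ('v \<Rightarrow> nat) set \<Rightarrow> bool" where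
  "form_ineq Ed M V' \<longleftrightarrow> (\<forall>f. l2_on V' f \<longrightarrow>
     (\<Sum>\<^sub>\<infinity>m\<in>V'. cnj (f m) * adj_op Ed M V' f m)
       \<le> complex_of_real (2 * real M) *
         (\<Sum>\<^sub>\<infinity>m\<in>V'. complex_of_real (potential Ed M m) * cnj (f m) * f m))"

end

theory Submission
  imports Defs
begin

text \<open>By the Schur test for the symmetric nonnegative kernel \<open>w\<close>, with \<open>|f m| |f n| \<le> (|f m|\<^sup>2 + |f n|\<^sup>2)/2\<close>,
  the form \<open>\<langle>f, A' f\<rangle>\<close> is real and at most \<open>\<Sum>\<^sub>m |f m|\<^sup>2 \<Sum>\<^sub>n w(m,n)\<close>, so it suffices to bound
  the row sums by \<open>2 M V_N(m)\<close>. A neighbour of \<open>m\<close> arises by moving one particle from \<open>y\<close> to \<open>x\<close>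
  along an edge; its weight \<open>\<surd>(m\<^sub>y (M - m\<^sub>x) (m\<^sub>x + 1) (M - m\<^sub>y + 1))\<close> is at most
  \<open>M m\<^sub>y (M - m\<^sub>x)\<close>, and the two orientations of an edge \<open>{x,y}\<close> together contribute
  \<open>2M (M/2 (m\<^sub>x + m\<^sub>y) - m\<^sub>x m\<^sub>y)\<close>. Restricting to \<open>V'\<close> only drops nonnegative terms from the
  row sums. Bounded degree makes \<open>V_N\<close> bounded on \<open>\<frak>M_N\<close>, which gives all the summability needed.\<close>

section \<open>Quadratic forms of symmetric kernels\<close>

lemma summable_on_Sigma_finite_fibres:
  fixes g :: "'a \<times> 'b \<Rightarrow> 'c::banach"
  assumes fin: "\<And>x. x \<in> A \<Longrightarrow> finite (B x)"
    and rows: "(\<lambda>x. \<Sum>y\<in>B x. norm (g (x, y))) summable_on A"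
  shows "g summable_on Sigma A B"
proof (rule abs_summable_summable)
  have rows': "(\<lambda>x. norm (\<Sum>\<^sub>\<infinity>y\<in>B x. norm (g (x, y)))) summable_on A"
    using rows by (rule summable_on_cong[THEN iffD1, rotated]) (simp add: fin sum_nonneg)
  show "(\<lambda>p. norm (g p)) summable_on Sigma A B"
  proof (rule Infinite_Sum.abs_summable_on_Sigma_iff[THEN iffD2, OF conjI])
    show "\<forall>x\<in>A. (\<lambda>y. norm (g (x, y))) summable_on B x"
      using fin by (blast intro: summable_on_finite)
  qed (fact rows')
qed

lemma hermitian_infsum_le:
  fixes h :: "'a \<times> 'a \<Rightarrow> complex" and g :: "'a \<times> 'a \<Rightarrow> real"
  assumes swap: "\<And>x y. (x, y) \<in> S \<Longrightarrow> (y, x) \<in> S"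
    and herm: "\<And>x y. (x, y) \<in> S \<Longrightarrow> h (y, x) = cnj (h (x, y))"
    and bound: "\<And>x y. (x, y) \<in> S \<Longrightarrow> norm (h (x, y)) \<le> (g (x, y) + g (y, x)) / 2"
    and g: "g summable_on S"
  shows "h summable_on S" and "infsum h S \<le> complex_of_real (infsum g S)"
proof -
  have bij: "bij_betw prod.swap S S"
    by (rule bij_betwI[where g = prod.swap]) (auto intro: swap)
  have g_swap: "(\<lambda>p. g (prod.swap p)) summable_on S" "infsum (\<lambda>p. g (prod.swap p)) S = infsum g S"
    using summable_on_reindex_bij_betw[OF bij] infsum_reindex_bij_betw[OF bij] g by auto
  define k where "k p = (g p + g (prod.swap p)) / 2" for p
  have k: "(k has_sum infsum g S) S"
    using has_sum_divide_const[OF has_sum_add[OF has_sum_infsum[OF g] has_sum_infsum[OF g_swap(1)]],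
        of 2]
    by (simp add: k_def[abs_def] g_swap(2))
  have h_le_k: "norm (h p) \<le> k p" if "p \<in> S" for p
    using bound that unfolding k_def by (cases p) auto
  have "(\<lambda>p. norm (h p)) summable_on S"
    by (rule summable_on_comparison_test[OF has_sum_imp_summable[OF k]]) (simp_all add: h_le_k)
  then show h: "h summable_on S"
    by (rule abs_summable_summable)
  have "cnj (infsum h S) = infsum (\<lambda>p. h (prod.swap p)) S"
    unfolding infsum_cnj[symmetric]
  proof (rule infsum_cong)
    fix p assume "p \<in> S"
    then show "cnj (h p) = h (prod.swap p)" by (cases p) (simp add: herm)
  qed
  also have "\<dots> = infsum h S" by (rule infsum_reindex_bij_betw[OF bij])
  finally have "Im (cnj (infsum h S)) = Im (infsum h S)" by simp
  then have real: "Im (infsum h S) = 0" by simp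
  have "Re (infsum h S) = (\<Sum>\<^sub>\<infinity>p\<in>S. Re (h p))" by (rule infsum_Re[OF h, symmetric])
  also have "\<dots> \<le> infsum k S"
    by (rule infsum_mono[OF summable_on_Re[OF h] has_sum_imp_summable[OF k]])
      (rule order_trans[OF complex_Re_le_cmod h_le_k])
  also have "\<dots> = infsum g S" using k by (rule infsumI)
  finally show "infsum h S \<le> complex_of_real (infsum g S)"
    using real by (simp add: less_eq_complex_def)
qed

lemma row_bounded_kernel_infsum_le:
  fixes w :: "'a \<Rightarrow> 'b \<Rightarrow> real" and F c :: "'a \<Rightarrow> real"
  assumes fin: "\<And>m. m \<in> V \<Longrightarrow> finite (Nb m)"
    and w_nonneg: "\<And>m n. m \<in> V \<Longrightarrow> n \<in> Nb m \<Longrightarrow> 0 \<le> w m n"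
    and F_nonneg: "\<And>m. m \<in> V \<Longrightarrow> 0 \<le> F m"
    and row_sum: "\<And>m. m \<in> V \<Longrightarrow> (\<Sum>n\<in>Nb m. w m n) \<le> c m"
    and weighted: "(\<lambda>m. c m * F m) summable_on V"
  shows "(\<lambda>p. w (fst p) (snd p) * F (fst p)) summable_on Sigma V Nb"
    and "(\<Sum>\<^sub>\<infinity>p\<in>Sigma V Nb. w (fst p) (snd p) * F (fst p)) \<le> (\<Sum>\<^sub>\<infinity>m\<in>V. c m * F m)"
proof -
  define g where "g p = w (fst p) (snd p) * F (fst p)" for p
  have g_nonneg: "0 \<le> g (m, n)" if "m \<in> V" "n \<in> Nb m" for m n
    using w_nonneg F_nonneg that by (simp add: g_def)
  have row_g: "(\<Sum>n\<in>Nb m. g (m, n)) \<le> c m * F m" if "m \<in> V" for m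
    using mult_right_mono[OF row_sum[OF that] F_nonneg[OF that]]
    by (simp add: g_def sum_distrib_right)
  have rows_summable: "(\<lambda>m. \<Sum>n\<in>Nb m. g (m, n)) summable_on V"
    by (rule summable_on_comparison_test[OF weighted]) (use row_g g_nonneg in \<open>auto intro: sum_nonneg\<close>)
  have "(\<lambda>m. \<Sum>n\<in>Nb m. norm (g (m, n))) summable_on V"
    using rows_summable by (rule summable_on_cong[THEN iffD2, rotated]) (use g_nonneg in auto)
  with fin have "g summable_on Sigma V Nb"
    by (rule summable_on_Sigma_finite_fibres)
  then show "(\<lambda>p. w (fst p) (snd p) * F (fst p)) summable_on Sigma V Nb"
    by (simp add: g_def[abs_def])
  have "infsum g (Sigma V Nb) = (\<Sum>\<^sub>\<infinity>m\<in>V. \<Sum>n\<in>Nb m. g (m, n))"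
    using infsum_Sigma_banach[OF \<open>g summable_on Sigma V Nb\<close>] by (simp add: fin cong: infsum_cong)
  also have "\<dots> \<le> (\<Sum>\<^sub>\<infinity>m\<in>V. c m * F m)"
    by (rule infsum_mono[OF rows_summable weighted row_g])
  finally show "(\<Sum>\<^sub>\<infinity>p\<in>Sigma V Nb. w (fst p) (snd p) * F (fst p)) \<le> (\<Sum>\<^sub>\<infinity>m\<in>V. c m * F m)"
    by (simp add: g_def[abs_def])
qed

lemma symmetric_kernel_form_le:
  fixes w :: "'a \<Rightarrow> 'a \<Rightarrow> real" and c :: "'a \<Rightarrow> real" and f :: "'a \<Rightarrow> complex"
  assumes R_sym: "\<And>m n. R m n \<Longrightarrow> R n m"
    and w_sym: "\<And>m n. w m n = w n m"
    and w_nonneg: "\<And>m n. m \<in> V \<Longrightarrow> n \<in> V \<Longrightarrow> R n m \<Longrightarrow> 0 \<le> w m n"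
    and finite_nbhd: "\<And>m. m \<in> V \<Longrightarrow> finite {n \<in> V. R n m}"
    and row_sum: "\<And>m. m \<in> V \<Longrightarrow> (\<Sum>n | n \<in> V \<and> R n m. w m n) \<le> c m"
    and weighted_l2: "(\<lambda>m. c m * (cmod (f m))\<^sup>2) summable_on V"
  shows "(\<Sum>\<^sub>\<infinity>m\<in>V. cnj (f m) * (\<Sum>\<^sub>\<infinity>n\<in>{n \<in> V. R n m}. complex_of_real (w m n) * f n))
           \<le> complex_of_real (\<Sum>\<^sub>\<infinity>m\<in>V. c m * (cmod (f m))\<^sup>2)"
proof -
  define Nb where "Nb m = {n \<in> V. R n m}" for m
  define F where "F m = (cmod (f m))\<^sup>2" for m
  define S where "S = Sigma V Nb"
  define g where "g p = w (fst p) (snd p) * F (fst p)" for p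
  define h where "h p = complex_of_real (w (fst p) (snd p)) * (cnj (f (fst p)) * f (snd p))" for p
  have fin: "finite (Nb m)" if "m \<in> V" for m
    using finite_nbhd[OF that] by (simp add: Nb_def)
  note g = row_bounded_kernel_infsum_le[of V Nb w F c, folded g_def[abs_def] S_def]
  have g_summable: "g summable_on S" and g_le: "infsum g S \<le> (\<Sum>\<^sub>\<infinity>m\<in>V. c m * F m)"
    using g fin w_nonneg row_sum weighted_l2 by (simp_all add: Nb_def F_def)
  have h_bound: "norm (h (m, n)) \<le> (g (m, n) + g (n, m)) / 2" if "(m, n) \<in> S" for m n
  proof -
    have "0 \<le> (cmod (f m) - cmod (f n))\<^sup>2" by simp
    then have "cmod (f m) * cmod (f n) \<le> (F m + F n) / 2"
      by (simp add: F_def power2_eq_square algebra_simps)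
    then have "w m n * (cmod (f m) * cmod (f n)) \<le> w m n * ((F m + F n) / 2)"
      using w_nonneg[of m n] that by (intro mult_left_mono) (auto simp: S_def Nb_def)
    then show ?thesis
      using w_nonneg[of m n] that
      by (auto simp: S_def Nb_def h_def g_def w_sym[of n m] norm_mult algebra_simps)
  qed
  have S_sym: "(n, m) \<in> S" if "(m, n) \<in> S" for m n
    using that R_sym by (auto simp: S_def Nb_def)
  have h_herm: "h (n, m) = cnj (h (m, n))" for m n
    by (simp add: h_def w_sym[of n m])
  note h = hermitian_infsum_le[of S h g, OF S_sym h_herm h_bound g_summable]
  have "(\<Sum>\<^sub>\<infinity>m\<in>V. cnj (f m) * (\<Sum>\<^sub>\<infinity>n\<in>Nb m. complex_of_real (w m n) * f n))
      = (\<Sum>\<^sub>\<infinity>m\<in>V. \<Sum>\<^sub>\<infinity>n\<in>Nb m. h (m, n))"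
    by (rule infsum_cong) (simp add: fin h_def sum_distrib_left mult.left_commute)
  also have "\<dots> = infsum h S"
    unfolding S_def by (rule infsum_Sigma_banach) (use h(1) S_def in simp)
  also have "\<dots> \<le> complex_of_real (infsum g S)"
    by (rule h(2))
  also have "\<dots> \<le> complex_of_real (\<Sum>\<^sub>\<infinity>m\<in>V. c m * F m)"
    using g_le by (simp add: less_eq_complex_def)
  finally show ?thesis
    by (simp add: Nb_def F_def)
qed

section \<open>Row sums of the weighted adjacency operator\<close>

definition occupied_edges :: "'v set set \<Rightarrow> ('v \<Rightarrow> nat) \<Rightarrow> 'v set set" where
  "occupied_edges Ed m = {e \<in> Ed. \<exists>x\<in>e. m x \<noteq> 0}"

definition edge_potential :: "nat \<Rightarrow> ('v \<Rightarrow> nat) \<Rightarrow> 'v set \<Rightarrow> real" where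
  "edge_potential M m e = real M / 2 * (\<Sum>x\<in>e. real (m x)) - (\<Prod>x\<in>e. real (m x))"

definition oriented_occupied_edges :: "'v set set \<Rightarrow> ('v \<Rightarrow> nat) \<Rightarrow> ('v \<times> 'v) set" where
  "oriented_occupied_edges Ed m = {(x, y). {x, y} \<in> occupied_edges Ed m \<and> x \<noteq> y}"

definition hop :: "('v \<Rightarrow> nat) \<Rightarrow> 'v \<Rightarrow> 'v \<Rightarrow> 'v \<Rightarrow> nat" where
  "hop m x y = m(x := Suc (m x), y := m y - 1)"

lemma simple_graph_edgeE:
  assumes "simple_graph Ed" "e \<in> Ed"
  obtains a b where "a \<noteq> b" "e = {a, b}"
  using assms unfolding simple_graph_def by (meson card_2_iff)

lemma occupied_edgeE:
  assumes "simple_graph Ed" "e \<in> occupied_edges Ed m"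
  obtains a b where "a \<noteq> b" "e = {a, b}"
proof -
  have "e \<in> Ed" using assms(2) by (simp add: occupied_edges_def)
  with assms(1) show ?thesis using that by (rule simple_graph_edgeE)
qed

lemma configs_le: "m \<in> configs M N \<Longrightarrow> m x \<le> M"
  by (simp add: configs_def)

lemma card_support_configs_le:
  assumes "m \<in> configs M N"
  shows "finite {x. m x \<noteq> 0}" "card {x. m x \<noteq> 0} \<le> N"
proof -
  show fin: "finite {x. m x \<noteq> 0}" using assms by (simp add: configs_def)
  have "card {x. m x \<noteq> 0} = (\<Sum>x | m x \<noteq> 0. 1)" by simp
  also have "\<dots> \<le> (\<Sum>x | m x \<noteq> 0. m x)" by (rule sum_mono) auto
  also have "\<dots> = N" using assms by (simp add: configs_def)
  finally show "card {x. m x \<noteq> 0} \<le> N" .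
qed

lemma occupied_edges_finite_card_le:
  assumes degree: "\<And>x. finite {e \<in> Ed. x \<in> e} \<and> card {e \<in> Ed. x \<in> e} \<le> D"
    and support: "finite {x. m x \<noteq> 0}"
  shows "finite (occupied_edges Ed m)" "card (occupied_edges Ed m) \<le> card {x. m x \<noteq> 0} * D"
proof -
  have eq: "occupied_edges Ed m = (\<Union>x\<in>{x. m x \<noteq> 0}. {e \<in> Ed. x \<in> e})"
    by (auto simp: occupied_edges_def)
  show "finite (occupied_edges Ed m)"
    unfolding eq using degree by (intro finite_UN_I support) blast
  have "card (occupied_edges Ed m) \<le> (\<Sum>x | m x \<noteq> 0. card {e \<in> Ed. x \<in> e})"
    unfolding eq by (rule card_UN_le[OF support])
  also have "\<dots> \<le> card {x. m x \<noteq> 0} * D"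
    using sum_bounded_above[of "{x. m x \<noteq> 0}" "\<lambda>x. card {e \<in> Ed. x \<in> e}" D] degree by simp
  finally show "card (occupied_edges Ed m) \<le> card {x. m x \<noteq> 0} * D" .
qed

lemma edge_potential_doubleton:
  assumes "a \<noteq> b"
  shows "edge_potential M m {a, b} =
    (real (m a) * (real M - real (m b)) + real (m b) * (real M - real (m a))) / 2"
  using assms by (simp add: edge_potential_def algebra_simps)

lemma edge_potential_bounds:
  assumes "a \<noteq> b" "m a \<le> M" "m b \<le> M"
  shows "0 \<le> edge_potential M m {a, b}" "edge_potential M m {a, b} \<le> (real M)\<^sup>2"
proof -
  have "0 \<le> real (m a) * (real M - real (m b))" "0 \<le> real (m b) * (real M - real (m a))"
    using assms by simp_all
  moreover have "real (m a) * (real M - real (m b)) \<le> real M * real M"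
    "real (m b) * (real M - real (m a)) \<le> real M * real M"
    using assms by (auto intro!: mult_mono)
  ultimately show "0 \<le> edge_potential M m {a, b}" "edge_potential M m {a, b} \<le> (real M)\<^sup>2"
    using assms(1) by (simp_all add: edge_potential_doubleton power2_eq_square)
qed

lemma potential_eq_sum_occupied_edges:
  assumes "simple_graph Ed" "finite (occupied_edges Ed m)"
  shows "potential Ed M m = (\<Sum>e\<in>occupied_edges Ed m. edge_potential M m e)"
proof -
  have "potential Ed M m = infsum (edge_potential M m) (occupied_edges Ed m)"
    unfolding potential_def edge_potential_def[abs_def]
  proof (rule infsum_cong_neutral)
    fix e assume e: "e \<in> Ed - occupied_edges Ed m"
    then obtain a b where "a \<noteq> b" "e = {a, b}"
      using simple_graph_edgeE[OF assms(1)] by blast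
    then show "real M / 2 * (\<Sum>x\<in>e. real (m x)) - (\<Prod>x\<in>e. real (m x)) = 0"
      using e by (auto simp: occupied_edges_def)
  qed (auto simp: occupied_edges_def)
  then show ?thesis using assms(2) by simp
qed

lemma potential_configs_bounds:
  assumes graph: "simple_graph Ed"
    and degree: "\<And>x. finite {e \<in> Ed. x \<in> e} \<and> card {e \<in> Ed. x \<in> e} \<le> D"
    and m: "m \<in> configs M N"
  shows "0 \<le> potential Ed M m" "potential Ed M m \<le> real (N * D) * (real M)\<^sup>2"
proof -
  note support = card_support_configs_le[OF m]
  note occupied = occupied_edges_finite_card_le[OF degree support(1)]
  have bounds: "0 \<le> edge_potential M m e \<and> edge_potential M m e \<le> (real M)\<^sup>2"
    if e: "e \<in> occupied_edges Ed m" for e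
  proof -
    obtain a b where "a \<noteq> b" "e = {a, b}" using graph e by (rule occupied_edgeE)
    then show ?thesis using edge_potential_bounds[of a b m M] configs_le[OF m] by simp
  qed
  show "0 \<le> potential Ed M m"
    using bounds by (simp add: potential_eq_sum_occupied_edges[OF graph occupied(1)] sum_nonneg)
  have "potential Ed M m \<le> real (card (occupied_edges Ed m)) * (real M)\<^sup>2"
    using sum_bounded_above[of "occupied_edges Ed m" "edge_potential M m" "(real M)\<^sup>2"] bounds
    by (simp add: potential_eq_sum_occupied_edges[OF graph occupied(1)])
  also have "\<dots> \<le> real (N * D) * (real M)\<^sup>2"
  proof (rule mult_right_mono)
    have "card (occupied_edges Ed m) \<le> N * D"
      using occupied(2) mult_le_mono1[OF support(2)] by (rule order_trans)
    then show "real (card (occupied_edges Ed m)) \<le> real (N * D)" by linarith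
  qed simp
  finally show "potential Ed M m \<le> real (N * D) * (real M)\<^sup>2" .
qed

lemma cadj_sym: "cadj Ed m n \<Longrightarrow> cadj Ed n m"
  unfolding cadj_def by (metis insert_commute)

lemma weight_commute: "weight M m n = weight M n m"
  unfolding weight_def by (intro prod.cong arg_cong[where f = sqrt]) (auto simp: algebra_simps)

lemma weight_hop:
  assumes "x \<noteq> y" "1 \<le> m y"
  shows "weight M m (hop m x y) =
    sqrt ((real (m y) * (real M - real (m x))) * ((real (m x) + 1) * (real M - real (m y) + 1)))"
proof -
  have "{z. m z \<noteq> hop m x y z} = {x, y}"
    using assms by (auto simp: hop_def)
  then have "weight M m (hop m x y) =
      sqrt (real M / 2 * (real (m x) + (real (m x) + 1) + 1) - real (m x) * (real (m x) + 1)) *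
      sqrt (real M / 2 * (real (m y) + (real (m y) - 1) + 1) - real (m y) * (real (m y) - 1))"
    using assms by (simp add: weight_def hop_def)
  then show ?thesis
    by (simp add: real_sqrt_mult[symmetric] algebra_simps)
qed

lemma weight_hop_bounds:
  assumes "x \<noteq> y" "1 \<le> m y" "m y \<le> M" "m x < M"
  shows "0 \<le> weight M m (hop m x y)"
    and "weight M m (hop m x y) \<le> real M * real (m y) * (real M - real (m x))"
proof -
  define u where "u = real (m y) * (real M - real (m x))"
  define v where "v = (real (m x) + 1) * (real M - real (m y) + 1)"
  have u: "1 \<le> u"
    unfolding u_def using mult_mono[of 1 "real (m y)" 1 "real M - real (m x)"] assms by auto
  have v: "0 \<le> v" "v \<le> real M * real M" unfolding v_def using assms by (auto intro!: mult_mono)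
  have w: "weight M m (hop m x y) = sqrt (u * v)"
    using weight_hop[of x y m M] assms by (simp add: u_def v_def)
  show "0 \<le> weight M m (hop m x y)"
    using u v by (simp add: w)
  \<comment> \<open>crude, but \<open>u\<close> is a positive integer: \<open>u v \<le> u M\<^sup>2 \<le> (u M)\<^sup>2\<close>\<close>
  have "u * v \<le> (u * real M)\<^sup>2"
  proof -
    have "u * v \<le> u * (real M * real M)" using u v by (intro mult_left_mono) auto
    also have "\<dots> \<le> u * u * (real M * real M)" using u by (intro mult_right_mono) auto
    finally show ?thesis by (simp add: power2_eq_square algebra_simps)
  qed
  then have "sqrt (u * v) \<le> u * real M"
    using u by (intro real_le_lsqrt) auto
  then show "weight M m (hop m x y) \<le> real M * real (m y) * (real M - real (m x))"
    by (simp add: w u_def algebra_simps)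
qed

lemma cadj_configsE:
  assumes "cadj Ed n m" "n \<in> configs M N"
  obtains x y where "{x, y} \<in> Ed" "x \<noteq> y" "1 \<le> m y" "m x < M" "n = hop m x y"
proof -
  obtain x y where xy: "{x, y} \<in> Ed" "n x = m x + 1" "n y + 1 = m y"
      "\<forall>z. z \<noteq> x \<and> z \<noteq> y \<longrightarrow> n z = m z"
    using assms(1) unfolding cadj_def by blast
  then have "x \<noteq> y" by auto
  moreover have "m x < M" using configs_le[OF assms(2), of x] xy by simp
  moreover have "n = hop m x y" using xy \<open>x \<noteq> y\<close> by (auto simp: hop_def fun_eq_iff)
  ultimately show ?thesis using that xy by auto
qed

lemma neighbour_weight_nonneg:
  assumes "m \<in> configs M N" "n \<in> configs M N" "cadj Ed n m"
  shows "0 \<le> weight M m n"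
proof -
  obtain x y where "{x, y} \<in> Ed" "x \<noteq> y" "1 \<le> m y" "m x < M" "n = hop m x y"
    using assms(3,2) by (rule cadj_configsE)
  then show ?thesis using weight_hop_bounds(1)[of x y m M] configs_le[OF assms(1)] by simp
qed

lemma finite_oriented_occupied_edges:
  assumes graph: "simple_graph Ed" and occupied: "finite (occupied_edges Ed m)"
  shows "finite (oriented_occupied_edges Ed m)"
proof -
  have "finite (\<Union>(occupied_edges Ed m))"
    by (intro finite_Union[OF occupied]) (auto elim: occupied_edgeE[OF graph])
  moreover have "oriented_occupied_edges Ed m \<subseteq> \<Union>(occupied_edges Ed m) \<times> \<Union>(occupied_edges Ed m)"
    by (auto simp: oriented_occupied_edges_def)
  ultimately show ?thesis
    by (simp add: finite_subset)
qed

lemma sum_oriented_occupied_edges: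
  assumes graph: "simple_graph Ed" and occupied: "finite (occupied_edges Ed m)"
  shows "(\<Sum>p\<in>oriented_occupied_edges Ed m. real M * real (m (snd p)) * (real M - real (m (fst p))))
    = 2 * real M * potential Ed M m"
proof -
  define P where "P = oriented_occupied_edges Ed m"
  define g where "g p = real M * real (m (snd p)) * (real M - real (m (fst p)))" for p
  have "(\<Sum>p\<in>P. g p) = (\<Sum>e\<in>occupied_edges Ed m. \<Sum>p | p \<in> P \<and> {fst p, snd p} = e. g p)"
    unfolding P_def
    by (rule sum.group[symmetric, OF finite_oriented_occupied_edges[OF graph occupied] occupied,
          where g = "\<lambda>p. {fst p, snd p}"])
      (auto simp: oriented_occupied_edges_def)
  also have "\<dots> = (\<Sum>e\<in>occupied_edges Ed m. 2 * real M * edge_potential M m e)"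
  proof (rule sum.cong)
    fix e assume e: "e \<in> occupied_edges Ed m"
    then obtain a b where ab: "a \<noteq> b" "e = {a, b}" using graph by (blast elim: occupied_edgeE)
    with e have "{p \<in> P. {fst p, snd p} = e} = {(a, b), (b, a)}"
      by (auto simp: P_def oriented_occupied_edges_def doubleton_eq_iff insert_commute)
    then show "(\<Sum>p | p \<in> P \<and> {fst p, snd p} = e. g p) = 2 * real M * edge_potential M m e"
      using ab by (simp add: g_def edge_potential_doubleton algebra_simps)
  qed simp
  also have "\<dots> = 2 * real M * potential Ed M m"
    by (simp add: potential_eq_sum_occupied_edges[OF graph occupied] sum_distrib_left)
  finally show ?thesis by (simp add: P_def g_def)
qed

lemma neighbour_weight_sum_le:
  assumes graph: "simple_graph Ed" and occupied: "finite (occupied_edges Ed m)"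
    and m: "m \<in> configs M N"
  shows "finite {n \<in> configs M N. cadj Ed n m}"
    and "(\<Sum>n | n \<in> configs M N \<and> cadj Ed n m. weight M m n) \<le> 2 * real M * potential Ed M m"
proof -
  define Nb where "Nb = {n \<in> configs M N. cadj Ed n m}"
  define P where "P = oriented_occupied_edges Ed m"
  define g where "g p = real M * real (m (snd p)) * (real M - real (m (fst p)))" for p
  have P_finite: "finite P"
    unfolding P_def using graph occupied by (rule finite_oriented_occupied_edges)
  have hop_from_P: "\<exists>p\<in>P. hop m (fst p) (snd p) = n \<and> weight M m n \<le> g p" if "n \<in> Nb" for n
  proof -
    from that have "cadj Ed n m" "n \<in> configs M N" by (simp_all add: Nb_def)
    then obtain x y where xy: "{x, y} \<in> Ed" "x \<noteq> y" "1 \<le> m y" "m x < M" "n = hop m x y"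
      by (rule cadj_configsE)
    then have "(x, y) \<in> P" by (auto simp: P_def oriented_occupied_edges_def occupied_edges_def)
    moreover have "weight M m n \<le> g (x, y)"
      using xy weight_hop_bounds(2)[of x y m M] configs_le[OF m] by (simp add: g_def)
    ultimately show ?thesis using xy(5) by (intro bexI[of _ "(x, y)"]) auto
  qed
  have "Nb \<subseteq> (\<lambda>p. hop m (fst p) (snd p)) ` P"
  proof
    fix n assume "n \<in> Nb"
    then obtain p where "p \<in> P" "n = hop m (fst p) (snd p)" using hop_from_P by metis
    then show "n \<in> (\<lambda>p. hop m (fst p) (snd p)) ` P" by (rule rev_image_eqI)
  qed
  then show Nb_finite: "finite {n \<in> configs M N. cadj Ed n m}"
    unfolding Nb_def[symmetric] by (rule finite_surj[OF P_finite])
  have "(\<Sum>n\<in>Nb. weight M m n) \<le> (\<Sum>p\<in>P. g p)"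
    using configs_le[OF m] hop_from_P
    by (intro sum_le_included[OF Nb_finite[folded Nb_def] P_finite, where i = "\<lambda>p. hop m (fst p) (snd p)"])
      (simp_all add: g_def)
  also have "\<dots> = 2 * real M * potential Ed M m"
    unfolding P_def g_def by (rule sum_oriented_occupied_edges[OF graph occupied])
  finally show "(\<Sum>n | n \<in> configs M N \<and> cadj Ed n m. weight M m n) \<le> 2 * real M * potential Ed M m"
    by (simp add: Nb_def)
qed

lemma neighbour_weight_sum_le_subset:
  assumes graph: "simple_graph Ed" and occupied: "finite (occupied_edges Ed m)"
    and m: "m \<in> configs M N" and V: "V \<subseteq> configs M N"
  shows "finite {n \<in> V. cadj Ed n m}"
    and "(\<Sum>n | n \<in> V \<and> cadj Ed n m. weight M m n) \<le> 2 * real M * potential Ed M m"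
proof -
  have nbhd: "{n \<in> V. cadj Ed n m} \<subseteq> {n \<in> configs M N. cadj Ed n m}"
    using V by blast
  note full_nbhd = neighbour_weight_sum_le[OF graph occupied m]
  show "finite {n \<in> V. cadj Ed n m}"
    using full_nbhd(1) nbhd by (rule finite_subset[rotated])
  have "(\<Sum>n | n \<in> V \<and> cadj Ed n m. weight M m n)
      \<le> (\<Sum>n | n \<in> configs M N \<and> cadj Ed n m. weight M m n)"
    using nbhd neighbour_weight_nonneg[OF m] by (intro sum_mono2[OF full_nbhd(1)]) auto
  then show "(\<Sum>n | n \<in> V \<and> cadj Ed n m. weight M m n) \<le> 2 * real M * potential Ed M m"
    using full_nbhd(2) by linarith
qed

lemma summable_on_potential_mult:
  assumes graph: "simple_graph Ed"
    and degree: "\<And>x. finite {e \<in> Ed. x \<in> e} \<and> card {e \<in> Ed. x \<in> e} \<le> D"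
    and V: "V \<subseteq> configs M N" and F: "F summable_on V" "\<And>m. 0 \<le> F m"
  shows "(\<lambda>m. potential Ed M m * F m) summable_on V"
proof (rule summable_on_comparison_test[OF summable_on_cmult_right[OF F(1), of "real (N * D) * (real M)\<^sup>2"]])
  fix m assume "m \<in> V"
  then have "m \<in> configs M N" using V by blast
  then show "potential Ed M m * F m \<le> real (N * D) * (real M)\<^sup>2 * F m" "0 \<le> potential Ed M m * F m"
    using potential_configs_bounds[OF graph degree] F(2)[of m] by (simp_all add: mult_right_mono)
qed

lemma infsum_of_real_mult_cnj:
  fixes c :: "'a \<Rightarrow> real" and f :: "'a \<Rightarrow> complex"
  assumes "(\<lambda>m. c m * (cmod (f m))\<^sup>2) summable_on V"
  shows "(\<Sum>\<^sub>\<infinity>m\<in>V. complex_of_real (c m) * cnj (f m) * f m)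
    = complex_of_real (\<Sum>\<^sub>\<infinity>m\<in>V. c m * (cmod (f m))\<^sup>2)"
proof (rule infsumI)
  have pointwise: "complex_of_real (c m) * cnj (f m) * f m = complex_of_real (c m * (cmod (f m))\<^sup>2)" for m
    by (simp only: of_real_mult complex_norm_square mult.assoc mult.commute[of "cnj (f m)"])
  show "((\<lambda>m. complex_of_real (c m) * cnj (f m) * f m)
      has_sum complex_of_real (\<Sum>\<^sub>\<infinity>m\<in>V. c m * (cmod (f m))\<^sup>2)) V"
    unfolding pointwise has_sum_of_real_iff using assms by (rule has_sum_infsum)
qed

lemma form_ineq_configs_subset:
  assumes graph: "simple_graph Ed" and degree: "bounded_degree Ed" and V': "V' \<subseteq> configs M N"
  shows "form_ineq Ed M V'"
  unfolding form_ineq_def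
proof (intro allI impI)
  fix f assume "l2_on V' f"
  then have l2: "(\<lambda>m. (cmod (f m))\<^sup>2) summable_on V'"
    by (simp add: l2_on_def)
  obtain D where D: "\<And>x. finite {e \<in> Ed. x \<in> e} \<and> card {e \<in> Ed. x \<in> e} \<le> D"
    using degree unfolding bounded_degree_def by blast
  have configs: "m \<in> configs M N" if "m \<in> V'" for m
    using V' that by blast
  have occupied: "finite (occupied_edges Ed m)" if "m \<in> V'" for m
    using occupied_edges_finite_card_le(1)[OF D card_support_configs_le(1)[OF configs[OF that]]] .
  note rows = neighbour_weight_sum_le_subset[OF graph occupied configs V']
  have weighted: "(\<lambda>m. potential Ed M m * (cmod (f m))\<^sup>2) summable_on V'"
    using summable_on_potential_mult[OF graph D V' l2] by simp
  then have "(\<lambda>m. 2 * real M * (potential Ed M m * (cmod (f m))\<^sup>2)) summable_on V'"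
    by (rule summable_on_cmult_right)
  then have weighted': "(\<lambda>m. 2 * real M * potential Ed M m * (cmod (f m))\<^sup>2) summable_on V'"
    by (simp only: mult.assoc)
  have "(\<Sum>\<^sub>\<infinity>m\<in>V'. cnj (f m) * adj_op Ed M V' f m)
      \<le> complex_of_real (\<Sum>\<^sub>\<infinity>m\<in>V'. 2 * real M * potential Ed M m * (cmod (f m))\<^sup>2)"
    unfolding adj_op_def
    by (rule symmetric_kernel_form_le[OF cadj_sym weight_commute
          neighbour_weight_nonneg[OF configs configs] rows weighted'])
  also have "\<dots> = complex_of_real (2 * real M) * complex_of_real (\<Sum>\<^sub>\<infinity>m\<in>V'. potential Ed M m * (cmod (f m))\<^sup>2)"
    by (simp only: of_real_mult[symmetric] mult.assoc infsum_cmult_right')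
  also have "complex_of_real (\<Sum>\<^sub>\<infinity>m\<in>V'. potential Ed M m * (cmod (f m))\<^sup>2)
      = (\<Sum>\<^sub>\<infinity>m\<in>V'. complex_of_real (potential Ed M m) * cnj (f m) * f m)"
    by (rule infsum_of_real_mult_cnj[OF weighted, symmetric])
  finally show "(\<Sum>\<^sub>\<infinity>m\<in>V'. cnj (f m) * adj_op Ed M V' f m)
      \<le> complex_of_real (2 * real M) * (\<Sum>\<^sub>\<infinity>m\<in>V'. complex_of_real (potential Ed M m) * cnj (f m) * f m)" .
qed

theorem mainTheorem3:
  fixes Ed :: "('v::countable) set set" and M N :: nat
  assumes "simple_graph Ed"
    and "graph_connected Ed"
    and "bounded_degree Ed"
  shows "form_ineq Ed M (configs M N)
    \<and> (\<forall>V' \<subseteq> configs M N. form_ineq Ed M V')"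
  using form_ineq_configs_subset[OF assms(1,3)] by blast

end
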